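(* Let $R=R(\dot R,S,L)$ be an extended affine root system, let $U$ be a subgroup of $\langle R^0\rangle$, $T=(\dot R+U)\cap R^\times$, and $\tilde S=S\cap U$. Then $T=(\dot R+\tilde S)\cap R^\times=\tilde R^\times_T$ and $\tilde R^0_T=\tilde S+\tilde S$.
   Context: An extended affine root system (EARS) is a triple $(R,(\cdot,\cdot),\mathcal V)$ with $\mathcal V$ a finite-dimensional real vector space, $(\cdot,\cdot)$ symmetric positive semidefinite, $R\subseteq\mathcal V$, such that with $R^\times=\{\alpha\in R:(\alpha,\alpha)\ne0\}$, $R^0=R\setminus R^\times$: $0\in R$; $R=-R$; $R$ spans $\mathcal V$; $\alpha\in R^\times\Rightarrow2\alpha\notin R$; $R$ discrete; for $\alpha\in R^\times,\beta\in R$ there are integers $d,u\ge0$ with $(\beta+\mathbb Z\alpha)\cap R=\{\beta-d\alpha,\dots,\beta+u\alpha\}$ and $2(\beta,\alpha)/(\alpha,\alpha)=d-u$; isotropic roots are non-isolated; $R^\times$ is connected. Let $\mathcal V^0=\mathrm{span}_{\mathbb R}R^0$; root systems are assumed reduced. $\langle X\rangle$ is the additive subgroup generated by $X$. Structure: there are a finite root system $\dot R\subseteq R$ (containing $0$, mapped bijectively onto the finite root system $R$ modulo $\mathcal V^0$) and semilattices $S,L\subseteq\mathcal V^0$ with $R=(S+S)\cup(\dot R_{sh}+S)\cup(\dot R_{lg}+L)$, $R^0=S+S$, where $\dot R_{sh},\dot R_{lg}$ are the nonzero short/long roots of $\dot R$ (all nonzero roots short if simply laced); written $R=R(\dot R,S,L)$.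 A semilattice $S$ in $\Lambda=\langle S\rangle$ has the form $S=\bigcup_{i=0}^m(\tau_i+2\Lambda)$ with $\tau_0=0$ and $\tau_i$ representatives of distinct cosets of $2\Lambda$. For a subset $T\subseteq R^\times$: $\tilde R_T^\times=\langle T\rangle\cap R^\times$, $\tilde R_T^0=\mathcal V^0\cap(\tilde R_T^\times-\tilde R_T^\times)$. *)

theory Defs
  imports "HOL-Analysis.Analysis"
begin

inductive_set addgen :: "'a::ab_group_add set \<Rightarrow> 'a set" for X where
  zero: "0 \<in> addgen X"
| base: "x \<in> X \<Longrightarrow> x \<in> addgen X"
| add: "x \<in> addgen X \<Longrightarrow> y \<in> addgen X \<Longrightarrow> x + y \<in> addgen X"
| neg: "x \<in> addgen X \<Longrightarrow> - x \<in> addgen X"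

definition is_subgroup :: "'a::ab_group_add set \<Rightarrow> bool" where
  "is_subgroup U \<longleftrightarrow> 0 \<in> U \<and> (\<forall>x\<in>U. \<forall>y\<in>U. x + y \<in> U) \<and> (\<forall>x\<in>U. - x \<in> U)"

definition msum :: "'a::plus set \<Rightarrow> 'a set \<Rightarrow> 'a set" where
  "msum A B = {a + b | a b. a \<in> A \<and> b \<in> B}"

definition nonisot :: "('a \<Rightarrow> 'a \<Rightarrow> real) \<Rightarrow> 'a set \<Rightarrow> 'a set" where
  "nonisot B R = {a \<in> R. B a a \<noteq> 0}"

definition isot :: "('a \<Rightarrow> 'a \<Rightarrow> real) \<Rightarrow> 'a set \<Rightarrow> 'a set" where
  "isot B R = R - nonisot B R"

definition V0 :: "('a::real_vector \<Rightarrow> 'a \<Rightarrow> real) \<Rightarrow> 'a set \<Rightarrow> 'a set" where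
  "V0 B R = span (isot B R)"

text \<open>Extended affine root system (R, B, V) with V the whole (finite-dimensional) space.\<close>
definition ears :: "('a::euclidean_space \<Rightarrow> 'a \<Rightarrow> real) \<Rightarrow> 'a set \<Rightarrow> bool" where
  "ears B R \<longleftrightarrow>
     bilinear B \<and> (\<forall>x y. B x y = B y x) \<and> (\<forall>x. 0 \<le> B x x) \<and>
     0 \<in> R \<and> uminus ` R = R \<and> span R = UNIV \<and>
     (\<forall>a\<in>nonisot B R. 2 *\<^sub>R a \<notin> R) \<and>
     (\<forall>x\<in>R. \<exists>e>0. \<forall>y\<in>R. dist x y < e \<longrightarrow> y = x) \<and>
     (\<forall>a\<in>nonisot B R. \<forall>b\<in>R. \<exists>d u :: nat.
         {k::int. b + of_int k *\<^sub>R a \<in> R} = {- int d .. int u} \<and>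
         2 * B b a / B a a = real d - real u) \<and>
     (\<forall>a\<in>isot B R. \<exists>b\<in>nonisot B R. a + b \<in> R) \<and>
     (\<forall>R1 R2. R1 \<union> R2 = nonisot B R \<and> R1 \<inter> R2 = {} \<and>
         (\<forall>x\<in>R1. \<forall>y\<in>R2. B x y = 0) \<longrightarrow> R1 = {} \<or> R2 = {})"

definition finite_root_system :: "('a::real_vector \<Rightarrow> 'a \<Rightarrow> real) \<Rightarrow> 'a set \<Rightarrow> bool" where
  "finite_root_system B Rd \<longleftrightarrow>
     finite Rd \<and> 0 \<in> Rd \<and> uminus ` Rd = Rd \<and>
     (\<forall>x\<in>span Rd. x \<noteq> 0 \<longrightarrow> 0 < B x x) \<and>
     (\<forall>a\<in>Rd - {0}. \<forall>b\<in>Rd. b - (2 * B b a / B a a) *\<^sub>R a \<in> Rd \<and>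
         2 * B b a / B a a \<in> \<int>) \<and>
     (\<forall>a\<in>Rd - {0}. 2 *\<^sub>R a \<notin> Rd)"

text \<open>Short and long nonzero roots of the finite root system (all short if simply laced).\<close>
definition short_roots :: "('a::zero \<Rightarrow> 'a \<Rightarrow> real) \<Rightarrow> 'a set \<Rightarrow> 'a set" where
  "short_roots B Rd = {a \<in> Rd - {0}. \<forall>b\<in>Rd - {0}. B a a \<le> B b b}"

definition long_roots :: "('a::zero \<Rightarrow> 'a \<Rightarrow> real) \<Rightarrow> 'a set \<Rightarrow> 'a set" where
  "long_roots B Rd = (Rd - {0}) - short_roots B Rd"

definition semilattice :: "'a::ab_group_add set \<Rightarrow> bool" where
  "semilattice S \<longleftrightarrow> (\<exists>\<tau>s. finite \<tau>s \<and> 0 \<in> \<tau>s \<and>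
      (\<forall>t1\<in>\<tau>s. \<forall>t2\<in>\<tau>s. t1 - t2 \<in> {x + x | x. x \<in> addgen S} \<longrightarrow> t1 = t2) \<and>
      S = (\<Union>t\<in>\<tau>s. {t + (x + x) | x. x \<in> addgen S}))"

definition ears_structure ::
  "('a::euclidean_space \<Rightarrow> 'a \<Rightarrow> real) \<Rightarrow> 'a set \<Rightarrow> 'a set \<Rightarrow> 'a set \<Rightarrow> 'a set \<Rightarrow> bool" where
  "ears_structure B R Rd S L \<longleftrightarrow>
     finite_root_system B Rd \<and> Rd \<subseteq> R \<and>
     (\<forall>a\<in>R. \<exists>!b. b \<in> Rd \<and> a - b \<in> V0 B R) \<and>
     semilattice S \<and> semilattice L \<and> S \<subseteq> V0 B R \<and> L \<subseteq> V0 B R \<and>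
     R = msum S S \<union> msum (short_roots B Rd) S \<union> msum (long_roots B Rd) L \<and>
     isot B R = msum S S"

definition tR_x :: "('a::ab_group_add \<Rightarrow> 'a \<Rightarrow> real) \<Rightarrow> 'a set \<Rightarrow> 'a set \<Rightarrow> 'a set" where
  "tR_x B R T = addgen T \<inter> nonisot B R"

definition tR_0 :: "('a::euclidean_space \<Rightarrow> 'a \<Rightarrow> real) \<Rightarrow> 'a set \<Rightarrow> 'a set \<Rightarrow> 'a set" where
  "tR_0 B R T = V0 B R \<inter> {x - y | x y. x \<in> tR_x B R T \<and> y \<in> tR_x B R T}"

end

theory Submission
  imports Defs
begin

(* A nonisotropic root decomposes uniquely as a + v with a in Rd and v in V^0, because the form
   is positive definite on span Rd and V^0 lies in its radical. For a root in Rd + U the U-part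
   is therefore its S-part (a short) or its L-part (a long), and L is contained in S: connectedness
   of R^x yields a long alpha and a short beta with (beta, alpha) <> 0, and reflecting beta in the
   root alpha + l (l in L) gives the root s_alpha(beta) - c l with s_alpha(beta) short and c = 1 or
   c = -1, so that -c l lies in S. The same uniqueness shows that every nonisotropic root in <T>
   already lies in Rd + U, and that the differences of elements of T lying in V^0 are exactly the
   sums of two elements of S meet U. *)

lemma msum_iff: "x \<in> msum A B \<longleftrightarrow> (\<exists>a\<in>A. \<exists>b\<in>B. x = a + b)"
  unfolding msum_def by blast

lemma msum_mono: "A \<subseteq> A' \<Longrightarrow> B \<subseteq> B' \<Longrightarrow> msum A B \<subseteq> msum A' B'"
  unfolding msum_def by blast

lemma addgen_subset_span: "addgen X \<subseteq> span X"
proof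
  show "x \<in> span X" if "x \<in> addgen X" for x
    using that by induction (auto intro: span_base span_add span_neg span_zero)
qed

lemma addgen_least:
  assumes "is_subgroup G" and "X \<subseteq> G"
  shows "addgen X \<subseteq> G"
proof
  show "x \<in> G" if "x \<in> addgen X" for x
    using that assms by induction (auto simp: is_subgroup_def)
qed

lemma is_subgroup_uminus: "is_subgroup U \<Longrightarrow> u \<in> U \<Longrightarrow> - u \<in> U"
  unfolding is_subgroup_def by blast

lemma is_subgroup_span: "is_subgroup (span X)"
  unfolding is_subgroup_def by (auto intro: span_zero span_add span_neg)

lemma is_subgroup_msum:
  fixes G H :: "'a::ab_group_add set"
  assumes G: "is_subgroup G" and H: "is_subgroup H"
  shows "is_subgroup (msum G H)"
proof -
  have "0 + 0 \<in> msum G H"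
    using G H unfolding is_subgroup_def msum_iff by blast
  moreover have "(a + b) + (c + d) \<in> msum G H"
    if "a \<in> G" "b \<in> H" "c \<in> G" "d \<in> H" for a b c d
  proof -
    have "(a + b) + (c + d) = (a + c) + (b + d)"
      by (simp add: algebra_simps)
    then show ?thesis
      using that G H unfolding is_subgroup_def msum_iff by blast
  qed
  moreover have "- (a + b) \<in> msum G H" if "a \<in> G" "b \<in> H" for a b
  proof -
    have "- (a + b) = - a + - b"
      by simp
    then show ?thesis
      using that G H unfolding is_subgroup_def msum_iff by blast
  qed
  ultimately show ?thesis
    unfolding is_subgroup_def by (auto simp: msum_iff)
qed

lemma semilattice_cosets:
  assumes "semilattice S"
  obtains \<tau>s where "0 \<in> \<tau>s" and "\<And>y. y \<in> S \<longleftrightarrow> (\<exists>t\<in>\<tau>s. \<exists>x\<in>addgen S. y = t + (x + x))"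
proof -
  \<comment> \<open>\<open>S\<close> occurs on both sides of its defining equation; naming \<open>addgen S\<close> keeps rewriting with it from looping.\<close>
  define \<Lambda> where "\<Lambda> = addgen S"
  obtain \<tau>s where "finite \<tau>s \<and> 0 \<in> \<tau>s
      \<and> (\<forall>t1\<in>\<tau>s. \<forall>t2\<in>\<tau>s. t1 - t2 \<in> {x + x | x. x \<in> \<Lambda>} \<longrightarrow> t1 = t2)
      \<and> S = (\<Union>t\<in>\<tau>s. {t + (x + x) | x. x \<in> \<Lambda>})"
    using assms unfolding semilattice_def \<Lambda>_def[symmetric] by (rule exE)
  then have "0 \<in> \<tau>s" and S: "S = (\<Union>t\<in>\<tau>s. {t + (x + x) | x. x \<in> \<Lambda>})"
    by blast+
  have "y \<in> S \<longleftrightarrow> (\<exists>t\<in>\<tau>s. \<exists>x\<in>addgen S. y = t + (x + x))" for y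
    unfolding \<Lambda>_def[symmetric] by (subst S) blast
  with \<open>0 \<in> \<tau>s\<close> show thesis
    by (rule that)
qed

lemma semilattice_zero:
  assumes "semilattice S"
  shows "0 \<in> S"
proof -
  obtain \<tau>s where "0 \<in> \<tau>s" and "\<And>y. y \<in> S \<longleftrightarrow> (\<exists>t\<in>\<tau>s. \<exists>x\<in>addgen S. y = t + (x + x))"
    using semilattice_cosets[OF assms] by blast
  then show ?thesis
    using addgen.zero by fastforce
qed

lemma semilattice_uminus:
  assumes "semilattice S" and "s \<in> S"
  shows "- s \<in> S"
proof -
  obtain \<tau>s where S: "\<And>y. y \<in> S \<longleftrightarrow> (\<exists>t\<in>\<tau>s. \<exists>x\<in>addgen S. y = t + (x + x))"
    using semilattice_cosets[OF assms(1)] by blast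
  then obtain t x where t: "t \<in> \<tau>s" and x: "x \<in> addgen S" and s: "s = t + (x + x)"
    using assms(2) by blast
  have coset: "t + (y + y) \<in> S" if "y \<in> addgen S" for y
    using S t that by blast
  have "t \<in> S"
    using coset[OF addgen.zero] by simp
  then have "- t + - x \<in> addgen S"
    using x by (blast intro: addgen.add addgen.neg addgen.base)
  then have "t + ((- t + - x) + (- t + - x)) \<in> S"
    by (rule coset)
  also have "t + ((- t + - x) + (- t + - x)) = - s"
    using s by (simp add: algebra_simps)
  finally show ?thesis .
qed

lemma quadratic_nonneg_discriminant:
  fixes a b c :: real
  assumes "0 \<le> c" and nonneg: "\<And>t. 0 \<le> a + 2 * b * t + c * t\<^sup>2"
  shows "b\<^sup>2 \<le> a * c"
proof (cases "c = 0")
  case True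
  have "b = 0"
  proof (rule ccontr)
    assume "b \<noteq> 0"
    then have "a + 2 * b * (- (a + 1) / (2 * b)) + c * (- (a + 1) / (2 * b))\<^sup>2 = -1"
      using True by (simp add: field_simps)
    moreover have "0 \<le> a + 2 * b * (- (a + 1) / (2 * b)) + c * (- (a + 1) / (2 * b))\<^sup>2"
      by (rule nonneg)
    ultimately show False
      by simp
  qed
  then show ?thesis
    using True by simp
next
  case False
  then have "0 < c" using assms(1) by simp
  have "0 \<le> a + 2 * b * (- b / c) + c * (- b / c)\<^sup>2"
    by (rule nonneg)
  also have "\<dots> = a - b\<^sup>2 / c"
    using \<open>0 < c\<close> by (simp add: field_simps power2_eq_square)
  finally show ?thesis
    using \<open>0 < c\<close> by (simp add: field_simps)
qed

locale psd_form =
  fixes B :: "'a::real_vector \<Rightarrow> 'a \<Rightarrow> real"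
  assumes bilinear_B: "bilinear B"
    and sym_B: "B x y = B y x"
    and nonneg_B: "0 \<le> B x x"
begin

lemma B_add_scale: "B (x + t *\<^sub>R y) (x + t *\<^sub>R y) = B x x + 2 * B x y * t + B y y * t\<^sup>2"
  using bilinear_B sym_B[of y x]
  by (simp add: bilinear_ladd bilinear_radd bilinear_lmul bilinear_rmul algebra_simps power2_eq_square)

lemma cauchy_schwarz: "(B x y)\<^sup>2 \<le> B x x * B y y"
proof (rule quadratic_nonneg_discriminant)
  show "0 \<le> B x x + 2 * B x y * t + B y y * t\<^sup>2" for t
    using nonneg_B[of "x + t *\<^sub>R y"] by (simp only: B_add_scale)
qed (rule nonneg_B)

lemma isotropic_imp_radical: "B x x = 0 \<Longrightarrow> B x y = 0"
  using cauchy_schwarz[of x y] by simp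

lemma span_isotropic_imp_radical:
  assumes "\<And>x. x \<in> X \<Longrightarrow> B x x = 0" and "v \<in> span X"
  shows "B v y = 0"
  using assms(2)
proof (induction rule: span_induct_alt)
  case base
  then show ?case using bilinear_B by (simp add: bilinear_lzero)
next
  case (step c x z)
  then show ?case
    using assms(1) isotropic_imp_radical bilinear_B by (simp add: bilinear_ladd bilinear_lmul)
qed

end

locale ears_with_structure =
  fixes B :: "'a::euclidean_space \<Rightarrow> 'a \<Rightarrow> real" and R Rd S L :: "'a set"
  assumes ears: "ears B R" and decomposition: "ears_structure B R Rd S L"
begin

sublocale psd_form B
  by unfold_locales (use ears in \<open>auto simp: ears_def\<close>)

lemma finite_root_system_Rd: "finite_root_system B Rd"
  using decomposition by (simp add: ears_structure_def)

lemma Rd_subset_R: "Rd \<subseteq> R"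
  using decomposition unfolding ears_structure_def by blast

lemma S_subset_V0: "S \<subseteq> V0 B R" and L_subset_V0: "L \<subseteq> V0 B R"
  using decomposition unfolding ears_structure_def by blast+

lemma zero_in_S: "0 \<in> S" and zero_in_L: "0 \<in> L"
  using decomposition semilattice_zero unfolding ears_structure_def by blast+

lemma S_uminus: "s \<in> S \<Longrightarrow> - s \<in> S"
  using decomposition semilattice_uminus unfolding ears_structure_def by blast

lemma nonisot_reflect:
  assumes "a \<in> nonisot B R" and "b \<in> R"
  shows "b - (2 * B b a / B a a) *\<^sub>R a \<in> R"
proof -
  have "\<forall>a\<in>nonisot B R. \<forall>b\<in>R. \<exists>d u :: nat.
      {k::int. b + of_int k *\<^sub>R a \<in> R} = {- int d .. int u} \<and> 2 * B b a / B a a = real d - real u"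
    using ears unfolding ears_def by (elim conjE) assumption
  then obtain d u :: nat where string: "{k::int. b + of_int k *\<^sub>R a \<in> R} = {- int d .. int u}"
    and cartan: "2 * B b a / B a a = real d - real u"
    using assms by blast
  have "int u - int d \<in> {k::int. b + of_int k *\<^sub>R a \<in> R}"
    unfolding string by simp
  moreover have "(of_int (int u - int d) :: real) = - (2 * B b a / B a a)"
    unfolding cartan by simp
  ultimately show ?thesis
    by simp
qed

lemma nonisot_connected:
  assumes "R1 \<union> R2 = nonisot B R" and "R1 \<inter> R2 = {}" and "\<forall>x\<in>R1. \<forall>y\<in>R2. B x y = 0"
  shows "R1 = {} \<or> R2 = {}"
proof -
  have "\<forall>R1 R2. R1 \<union> R2 = nonisot B R \<and> R1 \<inter> R2 = {} \<and> (\<forall>x\<in>R1. \<forall>y\<in>R2. B x y = 0)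
      \<longrightarrow> R1 = {} \<or> R2 = {}"
    using ears unfolding ears_def by (elim conjE) assumption
  with assms show ?thesis
    by blast
qed

lemma V0_subspace: "subspace (V0 B R)"
  unfolding V0_def by (rule subspace_span)

lemma V0_radical:
  assumes "v \<in> V0 B R"
  shows "B v y = 0" and "B y v = 0"
proof -
  show "B v y = 0"
    using assms unfolding V0_def
    by (rule span_isotropic_imp_radical[rotated]) (simp add: isot_def nonisot_def)
  then show "B y v = 0"
    by (simp add: sym_B)
qed

lemma B_add_V0: "s \<in> V0 B R \<Longrightarrow> t \<in> V0 B R \<Longrightarrow> B (a + s) (b + t) = B a b"
  using bilinear_B V0_radical by (simp add: bilinear_ladd bilinear_radd)

lemma span_Rd_pos: "x \<in> span Rd \<Longrightarrow> x \<noteq> 0 \<Longrightarrow> 0 < B x x"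
  using finite_root_system_Rd unfolding finite_root_system_def by blast

lemma Rd_pos: "a \<in> Rd \<Longrightarrow> a \<noteq> 0 \<Longrightarrow> 0 < B a a"
  using span_Rd_pos span_base by blast

lemma span_Rd_V0_cancel:
  assumes "a \<in> span Rd" and "b \<in> span Rd" and "s \<in> V0 B R" and "t \<in> V0 B R"
    and "a + s = b + t"
  shows "a = b"
proof (rule ccontr)
  assume "a \<noteq> b"
  then have "0 < B (a - b) (a - b)"
    using assms(1,2) by (intro span_Rd_pos span_diff) auto
  moreover have "a - b = t - s"
    using assms(5) by (simp add: algebra_simps)
  then have "a - b \<in> V0 B R"
    using assms(3,4) V0_subspace subspace_diff by metis
  then have "B (a - b) (a - b) = 0"
    by (rule V0_radical(1))
  ultimately show False
    by simp
qed

lemma Rd_part_of_root: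
  assumes "x \<in> R" and "w \<in> span Rd" and "x - w \<in> V0 B R"
  shows "w \<in> Rd"
proof -
  obtain b where b: "b \<in> Rd" "x - b \<in> V0 B R"
    using decomposition assms(1) unfolding ears_structure_def by blast
  have "w = b"
    using span_Rd_V0_cancel[OF assms(2) span_base[OF b(1)] assms(3) b(2)] by simp
  with b show ?thesis
    by simp
qed

lemma short_roots_subset: "short_roots B Rd \<subseteq> Rd - {0}"
  and long_roots_subset: "long_roots B Rd \<subseteq> Rd - {0}"
  and short_long_disjoint: "short_roots B Rd \<inter> long_roots B Rd = {}"
  unfolding short_roots_def long_roots_def by blast+

lemma nonisot_cases:
  assumes "x \<in> nonisot B R"
  shows "x \<in> msum (short_roots B Rd) S \<or> x \<in> msum (long_roots B Rd) L"
proof -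
  have "x \<in> R" and "x \<notin> isot B R"
    using assms unfolding isot_def nonisot_def by auto
  then show ?thesis
    using decomposition unfolding ears_structure_def by blast
qed

lemma Rd_plus_V0_nonisot:
  assumes "a \<in> Rd" "a \<noteq> 0" and "v \<in> V0 B R" and "a + v \<in> R"
  shows "a + v \<in> nonisot B R"
  using assms Rd_pos[OF assms(1,2)] B_add_V0[of v v a a] unfolding nonisot_def by simp

lemma short_plus_S_nonisot: "g \<in> short_roots B Rd \<Longrightarrow> s \<in> S \<Longrightarrow> g + s \<in> nonisot B R"
  using decomposition short_roots_subset S_subset_V0
  by (intro Rd_plus_V0_nonisot) (auto simp: ears_structure_def msum_iff)

lemma long_plus_L_nonisot: "g \<in> long_roots B Rd \<Longrightarrow> l \<in> L \<Longrightarrow> g + l \<in> nonisot B R"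
  using decomposition long_roots_subset L_subset_V0
  by (intro Rd_plus_V0_nonisot) (auto simp: ears_structure_def msum_iff)

lemma nonisot_decomposition:
  assumes "x \<in> nonisot B R" and "a \<in> Rd" and "v \<in> V0 B R" and "x = a + v"
  shows "(a \<in> short_roots B Rd \<and> v \<in> S) \<or> (a \<in> long_roots B Rd \<and> v \<in> L)"
proof -
  have unique: "g = a \<and> w = v" if "g \<in> Rd" "w \<in> V0 B R" "x = g + w" for g w
    using span_Rd_V0_cancel[OF span_base[OF that(1)] span_base[OF assms(2)] that(2) assms(3)]
      that(3) assms(4) by simp
  from nonisot_cases[OF assms(1)] show ?thesis
    using unique short_roots_subset long_roots_subset S_subset_V0 L_subset_V0
    unfolding msum_iff by blast
qed

lemma short_roots_nonempty: "short_roots B Rd \<noteq> {}"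
proof -
  have "0 \<in> isot B R"
    using ears bilinear_B by (simp add: ears_def isot_def nonisot_def bilinear_lzero)
  moreover have "\<forall>a\<in>isot B R. \<exists>b\<in>nonisot B R. a + b \<in> R"
    using ears by (simp add: ears_def)
  ultimately obtain x where "x \<in> nonisot B R"
    by blast
  then obtain a where a: "a \<in> Rd - {0}"
    using nonisot_cases short_roots_subset long_roots_subset unfolding msum_iff by blast
  have "finite Rd"
    using finite_root_system_Rd by (simp add: finite_root_system_def)
  then obtain b where "is_arg_min (\<lambda>x. B x x) (\<lambda>x. x \<in> Rd - {0}) b"
    using a ex_is_arg_min_if_finite[of "Rd - {0}"] by blast
  then have "b \<in> Rd - {0}" and "\<forall>c\<in>Rd - {0}. B b b \<le> B c c"
    by (auto simp: is_arg_min_linorder)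
  then show ?thesis
    unfolding short_roots_def by blast
qed

lemma short_less_long:
  assumes "\<beta> \<in> short_roots B Rd" and "\<alpha> \<in> long_roots B Rd"
  shows "B \<beta> \<beta> < B \<alpha> \<alpha>"
proof -
  have "\<alpha> \<in> Rd - {0}" and "\<alpha> \<notin> short_roots B Rd"
    using assms(2) unfolding long_roots_def by auto
  then obtain b where "b \<in> Rd - {0}" and "\<not> B \<alpha> \<alpha> \<le> B b b"
    unfolding short_roots_def by blast
  moreover have "B \<beta> \<beta> \<le> B b b"
    using assms(1) \<open>b \<in> Rd - {0}\<close> unfolding short_roots_def by blast
  ultimately show ?thesis
    by linarith
qed

lemma short_roots_reflect:
  assumes "\<alpha> \<in> Rd - {0}" and "\<beta> \<in> short_roots B Rd"
  shows "\<beta> - (2 * B \<beta> \<alpha> / B \<alpha> \<alpha>) *\<^sub>R \<alpha> \<in> short_roots B Rd"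
proof -
  define c where "c = 2 * B \<beta> \<alpha> / B \<alpha> \<alpha>"
  define g where "g = \<beta> - c *\<^sub>R \<alpha>"
  have "g \<in> Rd"
    using finite_root_system_Rd assms short_roots_subset
    unfolding finite_root_system_def g_def c_def by blast
  have "0 < B \<alpha> \<alpha>"
    using assms(1) Rd_pos by blast
  then have "c * B \<alpha> \<alpha> = 2 * B \<beta> \<alpha>"
    unfolding c_def by simp
  then have "B g g = B \<beta> \<beta>"
    unfolding g_def using bilinear_B sym_B[of \<alpha> \<beta>]
    by (simp add: bilinear_lsub bilinear_rsub bilinear_lmul bilinear_rmul algebra_simps)
  moreover have "0 < B \<beta> \<beta>"
    using assms(2) short_roots_subset Rd_pos by blast
  ultimately have "g \<noteq> 0"
    using bilinear_B by (auto simp: bilinear_lzero)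
  with \<open>g \<in> Rd\<close> \<open>B g g = B \<beta> \<beta>\<close> assms(2) show ?thesis
    unfolding g_def c_def short_roots_def by simp
qed

lemma cartan_short_long:
  assumes "\<alpha> \<in> long_roots B Rd" and "\<beta> \<in> short_roots B Rd" and "B \<beta> \<alpha> \<noteq> 0"
  shows "2 * B \<beta> \<alpha> / B \<alpha> \<alpha> = 1 \<or> 2 * B \<beta> \<alpha> / B \<alpha> \<alpha> = -1"
proof -
  define c where "c = 2 * B \<beta> \<alpha> / B \<alpha> \<alpha>"
  have "0 < B \<alpha> \<alpha>"
    using assms(1) long_roots_subset Rd_pos by blast
  have "c \<in> \<int>"
    using finite_root_system_Rd assms(1,2) short_roots_subset long_roots_subset
    unfolding finite_root_system_def c_def by blast
  then obtain k where k: "c = of_int k"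
    by (elim Ints_cases)
  have "c\<^sup>2 = 4 * (B \<beta> \<alpha>)\<^sup>2 / (B \<alpha> \<alpha> * B \<alpha> \<alpha>)"
    unfolding c_def by (simp add: power2_eq_square)
  also have "\<dots> \<le> 4 * (B \<beta> \<beta> * B \<alpha> \<alpha>) / (B \<alpha> \<alpha> * B \<alpha> \<alpha>)"
    using cauchy_schwarz[of \<beta> \<alpha>] by (intro divide_right_mono) auto
  also have "\<dots> = 4 * B \<beta> \<beta> / B \<alpha> \<alpha>"
    using \<open>0 < B \<alpha> \<alpha>\<close> by simp
  also have "\<dots> < 4"
    using short_less_long[OF assms(2,1)] \<open>0 < B \<alpha> \<alpha>\<close> by (simp add: divide_less_eq)
  finally have "(of_int k :: real)\<^sup>2 < 4"
    unfolding k .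
  then have "k\<^sup>2 < 4"
    by (simp only: of_int_power[symmetric] of_int_less_numeral_iff)
  then have "\<bar>k\<bar> < 2"
    using power2_less_imp_less[of "\<bar>k\<bar>" 2] by simp
  moreover have "k \<noteq> 0"
    using k assms(3) \<open>0 < B \<alpha> \<alpha>\<close> unfolding c_def by auto
  ultimately have "k = 1 \<or> k = -1"
    by arith
  then show ?thesis
    using k unfolding c_def by auto
qed

lemma short_long_nonorthogonal:
  assumes "long_roots B Rd \<noteq> {}"
  obtains \<alpha> \<beta> where "\<alpha> \<in> long_roots B Rd" and "\<beta> \<in> short_roots B Rd" and "B \<beta> \<alpha> \<noteq> 0"
proof -
  define R1 where "R1 = msum (short_roots B Rd) S \<inter> nonisot B R"
  define R2 where "R2 = msum (long_roots B Rd) L \<inter> nonisot B R"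
  have "R1 \<union> R2 = nonisot B R"
    unfolding R1_def R2_def using nonisot_cases by blast
  moreover have "R1 \<inter> R2 = {}"
  proof (rule equals0I)
    fix x assume "x \<in> R1 \<inter> R2"
    then obtain g s g' l where "g \<in> short_roots B Rd" "s \<in> S" "x = g + s"
      and "g' \<in> long_roots B Rd" "l \<in> L" "x = g' + l"
      unfolding R1_def R2_def Int_iff msum_iff by blast
    then have "g = g'"
      using short_roots_subset long_roots_subset S_subset_V0 L_subset_V0
      by (intro span_Rd_V0_cancel[of g g' s l] span_base) auto
    with \<open>g \<in> short_roots B Rd\<close> \<open>g' \<in> long_roots B Rd\<close> show False
      using short_long_disjoint by blast
  qed
  moreover obtain \<beta>0 \<alpha>0 where "\<beta>0 \<in> short_roots B Rd" and "\<alpha>0 \<in> long_roots B Rd"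
    using short_roots_nonempty assms by blast
  then have "\<beta>0 + 0 \<in> R1" and "\<alpha>0 + 0 \<in> R2"
    unfolding R1_def R2_def Int_iff msum_iff
    using zero_in_S zero_in_L short_plus_S_nonisot long_plus_L_nonisot by blast+
  ultimately obtain x y where "x \<in> R1" "y \<in> R2" "B x y \<noteq> 0"
    using nonisot_connected by blast
  then obtain g s g' l where "g \<in> short_roots B Rd" "s \<in> S" "x = g + s"
    and "g' \<in> long_roots B Rd" "l \<in> L" "y = g' + l"
    unfolding R1_def R2_def Int_iff msum_iff by blast
  moreover from this have "B x y = B g g'"
    using B_add_V0 S_subset_V0 L_subset_V0 by blast
  ultimately show thesis
    using that sym_B \<open>B x y \<noteq> 0\<close> by metis
qed

lemma L_subset_S:
  assumes "long_roots B Rd \<noteq> {}"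
  shows "L \<subseteq> S"
proof
  fix l assume "l \<in> L"
  then have "l \<in> V0 B R"
    using L_subset_V0 by blast
  obtain \<alpha> \<beta> where \<alpha>: "\<alpha> \<in> long_roots B Rd" and \<beta>: "\<beta> \<in> short_roots B Rd" and "B \<beta> \<alpha> \<noteq> 0"
    using short_long_nonorthogonal[OF assms] .
  define c where "c = 2 * B \<beta> \<alpha> / B \<alpha> \<alpha>"
  have "\<beta> \<in> R"
    using \<beta> short_roots_subset Rd_subset_R by blast
  have "B \<beta> (\<alpha> + l) = B \<beta> \<alpha>" and "B (\<alpha> + l) (\<alpha> + l) = B \<alpha> \<alpha>"
    using B_add_V0[of 0 l \<beta> \<alpha>] B_add_V0[of l l \<alpha> \<alpha>] \<open>l \<in> V0 B R\<close> subspace_0[OF V0_subspace]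
    by simp_all
  with nonisot_reflect[OF long_plus_L_nonisot[OF \<alpha> \<open>l \<in> L\<close>] \<open>\<beta> \<in> R\<close>]
  have "\<beta> - c *\<^sub>R (\<alpha> + l) \<in> R"
    unfolding c_def by simp
  moreover have "\<beta> - c *\<^sub>R (\<alpha> + l) = (\<beta> - c *\<^sub>R \<alpha>) + (- c) *\<^sub>R l"
    by (simp add: algebra_simps)
  moreover have g: "\<beta> - c *\<^sub>R \<alpha> \<in> short_roots B Rd"
    unfolding c_def using short_roots_reflect \<alpha> \<beta> long_roots_subset by blast
  moreover have "(- c) *\<^sub>R l \<in> V0 B R"
    using \<open>l \<in> V0 B R\<close> V0_subspace subspace_scale by blast
  ultimately have "(\<beta> - c *\<^sub>R \<alpha>) + (- c) *\<^sub>R l \<in> nonisot B R"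
    using Rd_plus_V0_nonisot short_roots_subset by force
  from nonisot_decomposition[OF this _ \<open>(- c) *\<^sub>R l \<in> V0 B R\<close> refl]
  have "(- c) *\<^sub>R l \<in> S"
    using g short_roots_subset short_long_disjoint by blast
  moreover have "c = 1 \<or> c = -1"
    unfolding c_def using cartan_short_long \<alpha> \<beta> \<open>B \<beta> \<alpha> \<noteq> 0\<close> by blast
  ultimately show "l \<in> S"
    using S_uminus[of "- l"] by auto
qed

lemma nonisot_V0_part_in_S:
  assumes "x \<in> nonisot B R" and "a \<in> Rd" and "v \<in> V0 B R" and "x = a + v"
  shows "v \<in> S"
  using nonisot_decomposition[OF assms] L_subset_S by blast

lemma Rd_plus_U_nonisot:
  assumes "U \<subseteq> V0 B R"
  shows "msum Rd U \<inter> nonisot B R = msum Rd (S \<inter> U) \<inter> nonisot B R"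
proof
  show "msum Rd U \<inter> nonisot B R \<subseteq> msum Rd (S \<inter> U) \<inter> nonisot B R"
  proof
    fix x assume "x \<in> msum Rd U \<inter> nonisot B R"
    then obtain a u where "a \<in> Rd" "u \<in> U" "x = a + u" "x \<in> nonisot B R"
      unfolding Int_iff msum_iff by blast
    moreover from this have "u \<in> S"
      using nonisot_V0_part_in_S assms by blast
    ultimately show "x \<in> msum Rd (S \<inter> U) \<inter> nonisot B R"
      unfolding Int_iff msum_iff by blast
  qed
  show "msum Rd (S \<inter> U) \<inter> nonisot B R \<subseteq> msum Rd U \<inter> nonisot B R"
    using msum_mono by blast
qed

lemma tR_x_Rd_plus_U:
  assumes "is_subgroup U" and "U \<subseteq> V0 B R"
  shows "tR_x B R (msum Rd U \<inter> nonisot B R) = msum Rd U \<inter> nonisot B R"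
proof
  show "msum Rd U \<inter> nonisot B R \<subseteq> tR_x B R (msum Rd U \<inter> nonisot B R)"
    unfolding tR_x_def using addgen.base by blast
  show "tR_x B R (msum Rd U \<inter> nonisot B R) \<subseteq> msum Rd U \<inter> nonisot B R"
  proof
    fix x assume x: "x \<in> tR_x B R (msum Rd U \<inter> nonisot B R)"
    have "msum Rd U \<inter> nonisot B R \<subseteq> msum (span Rd) U"
      using msum_mono[OF span_superset order_refl] by blast
    then have "addgen (msum Rd U \<inter> nonisot B R) \<subseteq> msum (span Rd) U"
      by (intro addgen_least is_subgroup_msum is_subgroup_span assms(1))
    then have "x \<in> msum (span Rd) U"
      using x unfolding tR_x_def by blast
    then obtain w u where w: "w \<in> span Rd" and u: "u \<in> U" and x_eq: "x = w + u"
      unfolding msum_iff by blast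
    have "x \<in> R" and "x \<in> nonisot B R"
      using x unfolding tR_x_def nonisot_def by auto
    moreover have "w \<in> Rd"
      using Rd_part_of_root[OF \<open>x \<in> R\<close> w] x_eq u assms(2) by auto
    ultimately show "x \<in> msum Rd U \<inter> nonisot B R"
      using u x_eq unfolding Int_iff msum_iff by blast
  qed
qed

lemma tR_0_Rd_plus_U_subset:
  assumes "is_subgroup U" and "U \<subseteq> V0 B R"
  shows "tR_0 B R (msum Rd U \<inter> nonisot B R) \<subseteq> msum (S \<inter> U) (S \<inter> U)"
proof
  fix z assume "z \<in> tR_0 B R (msum Rd U \<inter> nonisot B R)"
  then obtain a s b t where z: "z \<in> V0 B R" "z = (a + s) - (b + t)"
    and a: "a \<in> Rd" "s \<in> S \<inter> U" and b: "b \<in> Rd" "t \<in> S \<inter> U"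
    unfolding tR_0_def tR_x_Rd_plus_U[OF assms]
    unfolding Rd_plus_U_nonisot[OF assms(2)] Int_iff msum_iff by blast
  have "s - z \<in> V0 B R" and "t \<in> V0 B R"
    using a b z(1) S_subset_V0 V0_subspace subspace_diff by blast+
  moreover have "a + (s - z) = b + t"
    using z(2) by (simp add: algebra_simps)
  ultimately have "a = b"
    by (intro span_Rd_V0_cancel[of a b "s - z" t] span_base a(1) b(1))
  then have "z = s + (- t)"
    using z(2) by simp
  moreover have "- t \<in> S \<inter> U"
    using b(2) S_uminus is_subgroup_uminus[OF assms(1)] by blast
  ultimately show "z \<in> msum (S \<inter> U) (S \<inter> U)"
    using a(2) unfolding msum_iff by blast
qed

lemma tR_0_Rd_plus_U_supset:
  assumes "is_subgroup U" and "U \<subseteq> V0 B R"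
  shows "msum (S \<inter> U) (S \<inter> U) \<subseteq> tR_0 B R (msum Rd U \<inter> nonisot B R)"
proof
  fix z assume "z \<in> msum (S \<inter> U) (S \<inter> U)"
  then obtain s t where s: "s \<in> S \<inter> U" and t: "t \<in> S \<inter> U" and z: "z = s + t"
    unfolding msum_iff by blast
  obtain g where g: "g \<in> short_roots B Rd"
    using short_roots_nonempty by blast
  have "- t \<in> S \<inter> U"
    using t S_uminus is_subgroup_uminus[OF assms(1)] by blast
  then have "g + s \<in> msum Rd (S \<inter> U) \<inter> nonisot B R" and "g + - t \<in> msum Rd (S \<inter> U) \<inter> nonisot B R"
    using g s short_plus_S_nonisot short_roots_subset unfolding Int_iff msum_iff by blast+
  moreover have "z = (g + s) - (g + - t)"
    using z by simp
  moreover have "z \<in> V0 B R"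
    using s t z S_subset_V0 V0_subspace subspace_add by blast
  ultimately show "z \<in> tR_0 B R (msum Rd U \<inter> nonisot B R)"
    unfolding tR_0_def tR_x_Rd_plus_U[OF assms]
    unfolding Rd_plus_U_nonisot[OF assms(2)] by blast
qed

end

theorem lemma7p4:
  fixes B :: "'a::euclidean_space \<Rightarrow> 'a \<Rightarrow> real"
    and R Rd S L U :: "'a set"
  assumes "ears B R"
    and "ears_structure B R Rd S L"
    and "is_subgroup U" and "U \<subseteq> addgen (isot B R)"
  shows "msum Rd U \<inter> nonisot B R = msum Rd (S \<inter> U) \<inter> nonisot B R
    \<and> msum Rd U \<inter> nonisot B R = tR_x B R (msum Rd U \<inter> nonisot B R)
    \<and> tR_0 B R (msum Rd U \<inter> nonisot B R) = msum (S \<inter> U) (S \<inter> U)"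
proof -
  interpret ears_with_structure B R Rd S L
    using assms(1,2) by unfold_locales
  have "U \<subseteq> V0 B R"
    using assms(4) addgen_subset_span unfolding V0_def by blast
  then show ?thesis
    using Rd_plus_U_nonisot tR_x_Rd_plus_U[OF assms(3)]
      tR_0_Rd_plus_U_subset[OF assms(3)] tR_0_Rd_plus_U_supset[OF assms(3)]
    by (simp add: subset_antisym)
qed

end
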